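(* Let $\varepsilon>0$, $\Omega\subset\mathbb{R}^2$ bounded open, $u\in\mathcal{SF}_\varepsilon(\Omega)$ and $R\in\mathcal{R}_\varepsilon(u)$. Then exactly one of the following holds: (i) $R\in\mathcal{T}_\varepsilon$; (ii) every triangle $T\in\mathcal{T}_\varepsilon$ with $T\subset R$ has two edges in $\mathcal{N}_\varepsilon(u)$; (iii) there are exactly two triangles $T\in\mathcal{T}_\varepsilon$, $T\subset R$, having two edges in $\mathcal{C}_\varepsilon(u)$, and all the other triangles $T\subset R$ of $\mathcal{T}_\varepsilon$ have two edges in $\mathcal{N}_\varepsilon(u)$.
   Context: $\mathcal{L}=\{ae_1+b\hat e_2:a,b\in\mathbb{Z}\}$ with $e_1=(1,0)$, $\hat e_2=\frac12(1,\sqrt3)$, $\mathcal{L}_\varepsilon=\varepsilon\mathcal{L}$; $\mathcal{T}_\varepsilon$ is the set of closed triangles with vertices in $\mathcal{L}_\varepsilon$ pairwise at distance $\varepsilon$; $\mathcal{E}_\varepsilon$ the set of segments $[i,j]$, $i,j\in\mathcal{L}_\varepsilon$, $|i-j|=\varepsilon$. $n=(0,0,1)$; $\mathcal{SF}_\varepsilon(\Omega)$ is the set of $u:\mathcal{L}_\varepsilon\to\mathbb{S}^2$ with $u=n$ on $\mathcal{L}_\varepsilon\setminus\Omega$. $\mathcal{N}_\varepsilon(u)=\{[i,j]\in\mathcal{E}_\varepsilon:u(i)=-u(j)\}$, $\mathcal{C}_\varepsilon(u)=\mathcal{E}_\varepsilon\setminus\mathcal{N}_\varepsilon(u)$. Two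 triangles of $\mathcal{T}_\varepsilon$ are neighbours if their intersection is an edge in $\mathcal{N}_\varepsilon(u)$, and connected if joined by a finite chain of consecutive neighbours. $\mathcal{R}_\varepsilon(u)$ is the set of admissible interpolation regions: unions of pairwise connected triangles of $\mathcal{T}_\varepsilon$ that are maximal with respect to inclusion. *)

theory Defs
  imports "HOL-Analysis.Analysis"
begin

definition e1 :: "real^2" where "e1 = vector [1, 0]"
definition e2hat :: "real^2" where "e2hat = vector [1/2, sqrt 3 / 2]"

definition tri_lattice :: "(real^2) set" where
  "tri_lattice = {of_int a *\<^sub>R e1 + of_int b *\<^sub>R e2hat | a b. True}"

definition lattice_eps :: "real \<Rightarrow> (real^2) set" where
  "lattice_eps \<epsilon> = (\<lambda>x. \<epsilon> *\<^sub>R x) ` tri_lattice"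

definition nvec :: "real^3" where "nvec = vector [0, 0, 1]"

definition triangles_eps :: "real \<Rightarrow> (real^2) set set" where
  "triangles_eps \<epsilon> = {convex hull {a, b, c} | a b c.
      a \<in> lattice_eps \<epsilon> \<and> b \<in> lattice_eps \<epsilon> \<and> c \<in> lattice_eps \<epsilon> \<and>
      dist a b = \<epsilon> \<and> dist b c = \<epsilon> \<and> dist a c = \<epsilon>}"

definition edges_eps :: "real \<Rightarrow> (real^2) set set" where
  "edges_eps \<epsilon> = {closed_segment i j | i j.
      i \<in> lattice_eps \<epsilon> \<and> j \<in> lattice_eps \<epsilon> \<and> dist i j = \<epsilon>}"

text \<open>Admissible spin fields: maps from the lattice to the unit sphere, equal to n off Omega.
  Values of u off the lattice are irrelevant.\<close>
definition SF_eps :: "real \<Rightarrow> (real^2) set \<Rightarrow> (real^2 \<Rightarrow> real^3) set" where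
  "SF_eps \<epsilon> \<Omega> = {u. (\<forall>i \<in> lattice_eps \<epsilon>. norm (u i) = 1) \<and>
                       (\<forall>i \<in> lattice_eps \<epsilon> - \<Omega>. u i = nvec)}"

definition N_eps :: "real \<Rightarrow> (real^2 \<Rightarrow> real^3) \<Rightarrow> (real^2) set set" where
  "N_eps \<epsilon> u = {closed_segment i j | i j.
      i \<in> lattice_eps \<epsilon> \<and> j \<in> lattice_eps \<epsilon> \<and> dist i j = \<epsilon> \<and> u i = - u j}"

definition C_eps :: "real \<Rightarrow> (real^2 \<Rightarrow> real^3) \<Rightarrow> (real^2) set set" where
  "C_eps \<epsilon> u = edges_eps \<epsilon> - N_eps \<epsilon> u"

text \<open>Edges of a triangle: lattice edges contained in it (these are its three sides).\<close>
definition tri_edges :: "real \<Rightarrow> (real^2) set \<Rightarrow> (real^2) set set" where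
  "tri_edges \<epsilon> T = {e \<in> edges_eps \<epsilon>. e \<subseteq> T}"

definition neighbours :: "real \<Rightarrow> (real^2 \<Rightarrow> real^3) \<Rightarrow> (real^2) set \<Rightarrow> (real^2) set \<Rightarrow> bool" where
  "neighbours \<epsilon> u T1 T2 \<longleftrightarrow> T1 \<in> triangles_eps \<epsilon> \<and> T2 \<in> triangles_eps \<epsilon> \<and>
      T1 \<inter> T2 \<in> N_eps \<epsilon> u"

definition tri_connected :: "real \<Rightarrow> (real^2 \<Rightarrow> real^3) \<Rightarrow> (real^2) set \<Rightarrow> (real^2) set \<Rightarrow> bool" where
  "tri_connected \<epsilon> u T1 T2 \<longleftrightarrow> T1 \<in> triangles_eps \<epsilon> \<and> T2 \<in> triangles_eps \<epsilon> \<and>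
      (neighbours \<epsilon> u)\<^sup>*\<^sup>* T1 T2"

definition pc_union :: "real \<Rightarrow> (real^2 \<Rightarrow> real^3) \<Rightarrow> (real^2) set \<Rightarrow> bool" where
  "pc_union \<epsilon> u R \<longleftrightarrow> (\<exists>F. F \<subseteq> triangles_eps \<epsilon> \<and>
      (\<forall>T1\<in>F. \<forall>T2\<in>F. tri_connected \<epsilon> u T1 T2) \<and> R = \<Union>F)"

definition regions_eps :: "real \<Rightarrow> (real^2 \<Rightarrow> real^3) \<Rightarrow> (real^2) set set" where
  "regions_eps \<epsilon> u = {R. pc_union \<epsilon> u R \<and> (\<forall>R'. pc_union \<epsilon> u R' \<and> R \<subseteq> R' \<longrightarrow> R' = R)}"

end

(*
  The degree of a triangle in the neighbour graph equals its number of frustrated edges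
  (edges in N_eps), because every lattice edge lies in exactly two triangles, which meet
  exactly in that edge.  A triangle has at most two frustrated edges: three pairwise
  antipodal unit spins do not exist.  An admissible region is the union of a connected
  component of the neighbour graph, and this component is finite since every frustrated
  edge has an endpoint in the bounded set Omega.  Finally, in a finite connected graph
  whose degrees are 1 or 2, the number of vertices of degree 1 is even (handshake lemma)
  and at most 2 (a connected graph on n vertices has at least n - 1 edges).  The three
  alternatives are therefore: an isolated triangle, a cycle of triangles each with two
  frustrated edges, or a chain of triangles with exactly two ends.
*)

theory Submission
  imports Defs
begin

section \<open>Degrees in finite connected graphs\<close>

lemma even_card_involution:
  assumes "finite A" and "\<And>x. x \<in> A \<Longrightarrow> f x \<in> A"
    and "\<And>x. x \<in> A \<Longrightarrow> f (f x) = x" and "\<And>x. x \<in> A \<Longrightarrow> f x \<noteq> x"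
  shows "even (card A)"
  using assms
proof (induction A rule: finite_psubset_induct)
  case (psubset A)
  show ?case
  proof (cases "A = {}")
    case False
    then obtain x where x: "x \<in> A"
      by blast
    define B where "B = A - {x, f x}"
    have pair: "{x, f x} \<subseteq> A" "card {x, f x} = 2"
      using x psubset.prems(1)[OF x] psubset.prems(3)[OF x] by auto
    have "even (card B)"
    proof (rule psubset.IH)
      show "B \<subset> A"
        using x unfolding B_def by blast
      show "f y \<in> B" if "y \<in> B" for y
      proof -
        have "y \<in> A" "y \<noteq> x" "y \<noteq> f x"
          using that unfolding B_def by auto
        moreover have "f (f y) = y" "f (f x) = x"
          using psubset.prems(2) \<open>y \<in> A\<close> x by blast+
        ultimately show ?thesis
          using psubset.prems(1)[OF \<open>y \<in> A\<close>] unfolding B_def by auto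
      qed
      show "f (f y) = y" "f y \<noteq> y" if "y \<in> B" for y
        using that psubset.prems(2,3) unfolding B_def by blast+
    qed
    moreover have "card B = card A - 2" "2 \<le> card A"
      using card_Diff_subset[OF _ pair(1)] card_mono[OF psubset.hyps pair(1)] pair(2)
      unfolding B_def by simp_all
    ultimately show ?thesis
      by simp
  qed simp
qed

lemma even_sum_degree:
  fixes adj :: "'a \<Rightarrow> 'a \<Rightarrow> bool"
  assumes "finite V" and closed: "\<And>v w. v \<in> V \<Longrightarrow> adj v w \<Longrightarrow> w \<in> V"
    and sym: "\<And>v w. adj v w \<Longrightarrow> adj w v" and irrefl: "\<And>v. \<not> adj v v"
  shows "even (\<Sum>v\<in>V. card {w. adj v w})"
proof -
  have fin: "finite {w. adj v w}" if "v \<in> V" for v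
    by (rule finite_subset[OF _ \<open>finite V\<close>]) (use closed that in blast)
  have "(\<Sum>v\<in>V. card {w. adj v w}) = card (SIGMA v:V. {w. adj v w})"
    using \<open>finite V\<close> fin by (simp add: card_SigmaI)
  moreover have "even (card (SIGMA v:V. {w. adj v w}))"
  proof (rule even_card_involution[where f = prod.swap])
    show "finite (SIGMA v:V. {w. adj v w})"
      using \<open>finite V\<close> fin by (rule finite_SigmaI)
    show "prod.swap p \<in> (SIGMA v:V. {w. adj v w})" if "p \<in> (SIGMA v:V. {w. adj v w})" for p
      using that closed[of "fst p" "snd p"] sym[of "fst p" "snd p"] by (cases p) simp
    show "prod.swap p \<noteq> p" if "p \<in> (SIGMA v:V. {w. adj v w})" for p
      using that irrefl by (cases p) auto
  qed simp
  ultimately show ?thesis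
    by simp
qed

lemma breadth_first_parent:
  fixes adj :: "'a \<Rightarrow> 'a \<Rightarrow> bool"
  assumes V: "V = {v. adj\<^sup>*\<^sup>* v0 v}"
  obtains parent :: "'a \<Rightarrow> 'a" and depth :: "'a \<Rightarrow> nat"
  where "\<And>v. v \<in> V \<Longrightarrow> v \<noteq> v0 \<Longrightarrow> adj (parent v) v \<and> depth (parent v) < depth v"
proof -
  define depth where "depth v = (LEAST k. (adj ^^ k) v0 v)" for v
  have "\<exists>w. adj w v \<and> depth w < depth v" if v: "v \<in> V" "v \<noteq> v0" for v
  proof -
    have "\<exists>k. (adj ^^ k) v0 v"
      using v(1) unfolding V by (simp add: rtranclp_power)
    hence path: "(adj ^^ depth v) v0 v"
      unfolding depth_def by (rule LeastI_ex)
    then obtain k where k: "depth v = Suc k"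
      using v(2) by (cases "depth v") auto
    with path obtain w where "(adj ^^ k) v0 w" "adj w v"
      by (metis relpowp_Suc_E)
    moreover from this(1) have "depth w \<le> k"
      unfolding depth_def by (rule Least_le)
    ultimately show ?thesis
      using k by auto
  qed
  thus thesis
    using that[of "\<lambda>v. SOME w. adj w v \<and> depth w < depth v" depth] someI_ex by (metis (lifting))
qed

lemma sum_degree_connected_lower_bound:
  fixes adj :: "'a \<Rightarrow> 'a \<Rightarrow> bool"
  assumes V: "V = {v. adj\<^sup>*\<^sup>* v0 v}" and "finite V" and sym: "\<And>v w. adj v w \<Longrightarrow> adj w v"
  shows "2 * card V \<le> (\<Sum>v\<in>V. card {w. adj v w}) + 2"
proof -
  have closed: "w \<in> V" if "v \<in> V" "adj v w" for v w
    using that unfolding V by auto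
  have fin: "finite {w. adj v w}" if "v \<in> V" for v
    by (rule finite_subset[OF _ \<open>finite V\<close>]) (use closed that in blast)
  define A where "A = (SIGMA v:V. {w. adj v w})"
  have card_A: "card A = (\<Sum>v\<in>V. card {w. adj v w})"
    unfolding A_def using \<open>finite V\<close> fin by (simp add: card_SigmaI)
  \<comment> \<open>The arcs between the vertices \<open>v \<noteq> v0\<close> and their parents in a breadth-first tree
    are \<open>2 * (card V - 1)\<close> distinct arcs.\<close>
  obtain parent and depth :: "'a \<Rightarrow> nat"
    where parent: "\<And>v. v \<in> V \<Longrightarrow> v \<noteq> v0 \<Longrightarrow> adj (parent v) v \<and> depth (parent v) < depth v"
    using breadth_first_parent[OF V] by blast
  define W where "W = V - {v0}"
  define up down where "up = (\<lambda>v. (v, parent v)) ` W" and "down = (\<lambda>v. (parent v, v)) ` W"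
  have "(v, parent v) \<in> A \<and> (parent v, v) \<in> A" if "v \<in> W" for v
    using that parent[of v] sym[of "parent v" v] closed[of v "parent v"] unfolding A_def W_def by auto
  hence "up \<union> down \<subseteq> A"
    unfolding up_def down_def by blast
  moreover have "finite A"
    unfolding A_def using \<open>finite V\<close> fin by (rule finite_SigmaI)
  ultimately have "card (up \<union> down) \<le> card A"
    by (rule card_mono[rotated])
  moreover have "(v, parent v) \<noteq> (parent w, w)" if "v \<in> W" "w \<in> W" for v w
    using parent[of v] parent[of w] that unfolding W_def by auto
  hence "up \<inter> down = {}"
    unfolding up_def down_def by blast
  hence "card (up \<union> down) = card up + card down"
    unfolding up_def down_def W_def using \<open>finite V\<close> by (simp add: card_Un_disjoint)
  moreover have "card up = card W" "card down = card W"
    unfolding up_def down_def by (simp_all add: card_image inj_on_def)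
  moreover have "Suc (card W) = card V"
    unfolding W_def using card_Suc_Diff1[OF \<open>finite V\<close>, of v0] V by simp
  ultimately show ?thesis
    unfolding card_A[symmetric] by simp
qed

lemma card_degree_one_0_or_2:
  fixes adj :: "'a \<Rightarrow> 'a \<Rightarrow> bool" and d :: "'a \<Rightarrow> nat"
  assumes V: "V = {v. adj\<^sup>*\<^sup>* v0 v}" and "finite V"
    and sym: "\<And>v w. adj v w \<Longrightarrow> adj w v" and irrefl: "\<And>v. \<not> adj v v"
    and deg: "\<And>v. v \<in> V \<Longrightarrow> card {w. adj v w} = d v" and d12: "\<And>v. v \<in> V \<Longrightarrow> d v \<in> {1, 2}"
  shows "card {v \<in> V. d v = 1} = 0 \<or> card {v \<in> V. d v = 1} = 2"
proof -
  define L where "L = {v \<in> V. d v = 1}"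
  define S where "S = (\<Sum>v\<in>V. d v)"
  have closed: "w \<in> V" if "v \<in> V" "adj v w" for v w
    using that unfolding V by auto
  have S_eq: "S = (\<Sum>v\<in>V. card {w. adj v w})"
    unfolding S_def using deg by simp
  have "card L = (\<Sum>v\<in>L. 1)"
    by simp
  also have "\<dots> = (\<Sum>v\<in>V. if d v = 1 then 1 else 0)"
    unfolding L_def using \<open>finite V\<close> by (rule sum.inter_filter)
  finally have "S + card L = (\<Sum>v\<in>V. d v + (if d v = 1 then 1 else 0))"
    unfolding S_def by (simp add: sum.distrib)
  also have "\<dots> = (\<Sum>v\<in>V. 2)"
    using d12 by (intro sum.cong) auto
  finally have "S + card L = 2 * card V"
    by simp
  moreover have "even S"
    unfolding S_eq using even_sum_degree[OF \<open>finite V\<close> closed sym irrefl] .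
  moreover have "2 * card V \<le> S + 2"
    unfolding S_eq using sum_degree_connected_lower_bound[OF V \<open>finite V\<close> sym] .
  ultimately show ?thesis
    unfolding L_def by presburger
qed

lemma component_eq_singleton_iff:
  fixes adj :: "'a \<Rightarrow> 'a \<Rightarrow> bool"
  assumes V: "V = {v. adj\<^sup>*\<^sup>* v0 v}" and irrefl: "\<And>v. \<not> adj v v"
  shows "V = {v0} \<longleftrightarrow> (\<forall>w. \<not> adj v0 w)"
proof
  assume V0: "V = {v0}"
  show "\<forall>w. \<not> adj v0 w"
  proof (intro allI notI)
    fix w assume "adj v0 w"
    hence "w = v0"
      using V0 unfolding V by (metis mem_Collect_eq r_into_rtranclp singletonD)
    thus False
      using \<open>adj v0 w\<close> irrefl by simp
  qed
next
  assume "\<forall>w. \<not> adj v0 w"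
  thus "V = {v0}"
    unfolding V by (auto elim: converse_rtranclpE)
qed

lemma component_has_neighbour:
  fixes adj :: "'a \<Rightarrow> 'a \<Rightarrow> bool"
  assumes V: "V = {v. adj\<^sup>*\<^sup>* v0 v}" and sym: "\<And>v w. adj v w \<Longrightarrow> adj w v"
    and "v \<in> V" and "V \<noteq> {v0}"
  shows "\<exists>w. adj v w"
proof (cases "v = v0")
  case True
  obtain u where "adj\<^sup>*\<^sup>* v0 u" "u \<noteq> v0"
    using assms(4) unfolding V by auto
  thus ?thesis
    unfolding True by (auto elim: converse_rtranclpE)
next
  case False
  obtain u where "adj u v"
    using assms(3) False unfolding V by (metis mem_Collect_eq rtranclp.cases)
  thus ?thesis
    using sym by blast
qed

lemma component_degree_trichotomy:
  fixes adj :: "'a \<Rightarrow> 'a \<Rightarrow> bool" and d :: "'a \<Rightarrow> nat"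
  assumes V: "V = {v. adj\<^sup>*\<^sup>* v0 v}" and "finite V"
    and sym: "\<And>v w. adj v w \<Longrightarrow> adj w v" and irrefl: "\<And>v. \<not> adj v v"
    and deg: "\<And>v. v \<in> V \<Longrightarrow> card {w. adj v w} = d v" and le2: "\<And>v. v \<in> V \<Longrightarrow> d v \<le> 2"
  shows "(V = {v0} \<and> \<not> (\<forall>v\<in>V. d v = 2) \<and>
            \<not> (card {v \<in> V. d v = 1} = 2 \<and> (\<forall>v\<in>V. d v \<noteq> 1 \<longrightarrow> d v = 2))) \<or>
         (V \<noteq> {v0} \<and> (\<forall>v\<in>V. d v = 2) \<and>
            \<not> (card {v \<in> V. d v = 1} = 2 \<and> (\<forall>v\<in>V. d v \<noteq> 1 \<longrightarrow> d v = 2))) \<or>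
         (V \<noteq> {v0} \<and> \<not> (\<forall>v\<in>V. d v = 2) \<and>
            (card {v \<in> V. d v = 1} = 2 \<and> (\<forall>v\<in>V. d v \<noteq> 1 \<longrightarrow> d v = 2)))"
proof (cases "V = {v0}")
  case True
  hence "d v0 = 0"
    using component_eq_singleton_iff[OF V irrefl] deg[of v0] by simp
  thus ?thesis
    using True by simp
next
  case False
  have d12: "d v \<in> {1, 2}" if "v \<in> V" for v
  proof -
    have "finite {w. adj v w}"
      by (rule finite_subset[OF _ \<open>finite V\<close>]) (use that in \<open>auto simp: V\<close>)
    hence "card {w. adj v w} \<noteq> 0"
      using component_has_neighbour[OF V sym that False] by (auto simp: card_0_eq)
    thus ?thesis
      using le2[OF that] deg[OF that] by auto
  qed
  have "card {v \<in> V. d v = 1} = 0 \<or> card {v \<in> V. d v = 1} = 2"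
    by (rule card_degree_one_0_or_2[OF V \<open>finite V\<close> sym irrefl deg d12])
  thus ?thesis
  proof
    assume L0: "card {v \<in> V. d v = 1} = 0"
    hence "\<forall>v\<in>V. d v = 2"
      using d12 \<open>finite V\<close> by auto
    thus ?thesis
      using False L0 by simp
  next
    assume L2: "card {v \<in> V. d v = 1} = 2"
    hence "{v \<in> V. d v = 1} \<noteq> {}"
      by (metis card.empty zero_neq_numeral)
    hence "\<not> (\<forall>v\<in>V. d v = 2)"
      by fastforce
    moreover have "\<forall>v\<in>V. d v \<noteq> 1 \<longrightarrow> d v = 2"
      using d12 by blast
    ultimately show ?thesis
      using False L2 by simp
  qed
qed

section \<open>Coordinates on the triangular lattice\<close>

(* The squared length of x e1 + y e2hat. *)
definition lnorm2 :: "'a::comm_ring_1 \<Rightarrow> 'a \<Rightarrow> 'a" where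
  "lnorm2 x y = x\<^sup>2 + x * y + y\<^sup>2"

definition lpoint :: "real \<Rightarrow> real \<Rightarrow> real \<Rightarrow> real^2" where
  "lpoint e x y = e *\<^sub>R (x *\<^sub>R e1 + y *\<^sub>R e2hat)"

(* The coordinates of p in the basis e *R e1, e *R e2hat, i.e. the inverse of lpoint e. *)
definition lcoord1 :: "real \<Rightarrow> real^2 \<Rightarrow> real" where
  "lcoord1 e p = p$1 / e - p$2 / (e * sqrt 3)"

definition lcoord2 :: "real \<Rightarrow> real^2 \<Rightarrow> real" where
  "lcoord2 e p = 2 * p$2 / (e * sqrt 3)"

lemma lpoint_nth:
  "lpoint e x y $ 1 = e * (x + y / 2)" "lpoint e x y $ 2 = e * y * sqrt 3 / 2"
  by (simp_all add: lpoint_def e1_def e2hat_def algebra_simps)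

lemma lcoord_lpoint [simp]:
  assumes "e \<noteq> 0"
  shows "lcoord1 e (lpoint e x y) = x" "lcoord2 e (lpoint e x y) = y"
  using assms by (simp_all add: lcoord1_def lcoord2_def lpoint_nth field_simps)

lemma lpoint_lcoord:
  assumes "e \<noteq> 0"
  shows "lpoint e (lcoord1 e p) (lcoord2 e p) = p"
  using assms by (simp add: vec_eq_iff forall_2 lpoint_nth lcoord1_def lcoord2_def field_simps)

lemma eq_lpoint_iff:
  assumes "e \<noteq> 0"
  shows "p = lpoint e x y \<longleftrightarrow> lcoord1 e p = x \<and> lcoord2 e p = y"
  using assms lpoint_lcoord[OF assms, of p] by auto

lemma lpoint_add: "lpoint e x y + lpoint e x' y' = lpoint e (x + x') (y + y')"
  by (simp add: lpoint_def algebra_simps)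

lemma lpoint_diff: "lpoint e x y - lpoint e x' y' = lpoint e (x - x') (y - y')"
  by (simp add: lpoint_def algebra_simps)

lemma scaleR_lpoint: "c *\<^sub>R lpoint e x y = lpoint e (c * x) (c * y)"
  by (simp add: lpoint_def algebra_simps)

lemma dist_lpoint: "dist (lpoint e x y) (lpoint e x' y') = \<bar>e\<bar> * sqrt (lnorm2 (x' - x) (y' - y))"
proof -
  have "(lpoint e x y $ 1 - lpoint e x' y' $ 1)\<^sup>2 + (lpoint e x y $ 2 - lpoint e x' y' $ 2)\<^sup>2
      = e\<^sup>2 * lnorm2 (x' - x) (y' - y)"
    by (simp add: lnorm2_def lpoint_nth power2_eq_square algebra_simps)
  thus ?thesis
    by (simp add: dist_vec_def L2_set_def sum_2 dist_real_def real_sqrt_mult)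
qed

lemma mem_lattice_triangle:
  assumes "e \<noteq> 0" and "s \<noteq> 0"
  shows "p \<in> convex hull {lpoint e x y, lpoint e (x + s) y, lpoint e x (y + s)} \<longleftrightarrow>
    0 \<le> (lcoord1 e p - x) / s \<and> 0 \<le> (lcoord2 e p - y) / s \<and>
    (lcoord1 e p - x) / s + (lcoord2 e p - y) / s \<le> 1"
proof -
  have eq: "p = lpoint e (x + s * u) (y + s * v) \<longleftrightarrow>
      u = (lcoord1 e p - x) / s \<and> v = (lcoord2 e p - y) / s" for u v
    using assms by (auto simp: eq_lpoint_iff field_simps)
  have "p \<in> convex hull {lpoint e x y, lpoint e (x + s) y, lpoint e x (y + s)} \<longleftrightarrow>
      (\<exists>u v. 0 \<le> u \<and> 0 \<le> v \<and> u + v \<le> 1 \<and> p = lpoint e (x + s * u) (y + s * v))"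
    unfolding convex_hull_3_alt lpoint_diff scaleR_lpoint lpoint_add by (auto simp: algebra_simps)
  thus ?thesis
    unfolding eq by simp
qed

lemma mem_lattice_segmentI:
  assumes "e \<noteq> 0" and "0 \<le> t" and "t \<le> 1"
    and "lcoord1 e p = x + t * (x' - x)" and "lcoord2 e p = y + t * (y' - y)"
  shows "p \<in> closed_segment (lpoint e x y) (lpoint e x' y')"
proof -
  have "p = (1 - t) *\<^sub>R lpoint e x y + t *\<^sub>R lpoint e x' y'"
    unfolding scaleR_lpoint lpoint_add eq_lpoint_iff[OF assms(1)] assms(4,5) by (simp add: algebra_simps)
  thus ?thesis
    using assms(2,3) unfolding in_segment by blast
qed

definition node :: "real \<Rightarrow> int \<Rightarrow> int \<Rightarrow> real^2" where
  "node e a b = lpoint e (of_int a) (of_int b)"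

lemma lcoord_node [simp]:
  assumes "e \<noteq> 0"
  shows "lcoord1 e (node e a b) = of_int a" "lcoord2 e (node e a b) = of_int b"
  using assms by (simp_all add: node_def)

lemma node_eq_iff [simp]: "e \<noteq> 0 \<Longrightarrow> node e a b = node e c d \<longleftrightarrow> a = c \<and> b = d"
  by (metis lcoord_node of_int_eq_iff)

lemma lattice_eps_eq: "lattice_eps e = {node e a b | a b. True}"
  by (auto simp: lattice_eps_def tri_lattice_def node_def lpoint_def)

lemma dist_node_eq_iff:
  assumes "e > 0"
  shows "dist (node e a b) (node e c d) = e \<longleftrightarrow> lnorm2 (c - a) (d - b) = 1"
proof -
  have "dist (node e a b) (node e c d) = e * sqrt (of_int (lnorm2 (c - a) (d - b)))"
    using assms by (simp add: node_def dist_lpoint lnorm2_def)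
  thus ?thesis
    using assms by simp
qed

lemma lnorm2_eq_1_cases:
  fixes x y :: int
  assumes "lnorm2 x y = 1"
  shows "(x, y) \<in> {(1, 0), (-1, 0), (0, 1), (0, -1), (1, -1), (-1, 1)}"
proof -
  have "(2 * x + y)\<^sup>2 + 3 * y\<^sup>2 = 4" "(2 * y + x)\<^sup>2 + 3 * x\<^sup>2 = 4"
    using assms by (simp_all add: lnorm2_def power2_eq_square algebra_simps)
  hence "x\<^sup>2 \<le> 1" "y\<^sup>2 \<le> 1"
    by (smt (verit) zero_le_power2)+
  hence "x \<in> {-1, 0, 1}" "y \<in> {-1, 0, 1}"
    by (auto simp: abs_square_le_1)
  thus ?thesis
    using assms by (elim insertE emptyE) (simp_all add: lnorm2_def)
qed

lemma unit_triangle_int: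
  fixes a1 a2 b1 b2 c1 c2 :: int
  assumes "lnorm2 (b1 - a1) (b2 - a2) = 1" and "lnorm2 (c1 - a1) (c2 - a2) = 1"
    and "lnorm2 (c1 - b1) (c2 - b2) = 1"
  shows "\<exists>i j. {(a1, a2), (b1, b2), (c1, c2)} = {(i, j), (i + 1, j), (i, j + 1)} \<or>
               {(a1, a2), (b1, b2), (c1, c2)} = {(i + 1, j + 1), (i, j + 1), (i + 1, j)}"
proof -
  obtain x y x' y' where b: "b1 = a1 + x" "b2 = a2 + y" and c: "c1 = a1 + x'" "c2 = a2 + y'"
    by (metis add.commute diff_add_cancel)
  have "(x, y) \<in> {(1, 0), (-1, 0), (0, 1), (0, -1), (1, -1), (-1, 1)}"
    using lnorm2_eq_1_cases assms(1) unfolding b by simp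
  moreover have "(x', y') \<in> {(1, 0), (-1, 0), (0, 1), (0, -1), (1, -1), (-1, 1)}"
    using lnorm2_eq_1_cases assms(2) unfolding c by simp
  moreover have "lnorm2 (x' - x) (y' - y) = 1"
    using assms(3) unfolding b c by simp
  ultimately have "(x, y, x', y') \<in> {(1, 0, 0, 1), (0, 1, 1, 0), (0, 1, -1, 1), (-1, 1, 0, 1), (-1, 1, -1, 0),
      (-1, 0, -1, 1), (-1, 0, 0, -1), (0, -1, -1, 0), (0, -1, 1, -1), (1, -1, 0, -1), (1, -1, 1, 0),
      (1, 0, 1, -1)}"
    by (elim insertE emptyE) (simp_all add: lnorm2_def)
  moreover define i j where "i = a1 + min 0 (min x x')" and "j = a2 + min 0 (min y y')"
  ultimately have "{(a1, a2), (b1, b2), (c1, c2)} = {(i, j), (i + 1, j), (i, j + 1)} \<or>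
      {(a1, a2), (b1, b2), (c1, c2)} = {(i + 1, j + 1), (i, j + 1), (i + 1, j)}"
    unfolding b c i_def j_def by (elim insertE emptyE) (simp_all add: insert_commute)
  thus ?thesis
    by blast
qed

section \<open>Lattice triangles and edges\<close>

definition up_tri :: "real \<Rightarrow> int \<Rightarrow> int \<Rightarrow> (real^2) set" where
  "up_tri e a b = convex hull {node e a b, node e (a + 1) b, node e a (b + 1)}"

(* Vertices listed from the corner (a + 1, b + 1), to match mem_lattice_triangle with s = -1. *)
definition down_tri :: "real \<Rightarrow> int \<Rightarrow> int \<Rightarrow> (real^2) set" where
  "down_tri e a b = convex hull {node e (a + 1) (b + 1), node e a (b + 1), node e (a + 1) b}"

definition edge_e1 :: "real \<Rightarrow> int \<Rightarrow> int \<Rightarrow> (real^2) set" where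
  "edge_e1 e a b = closed_segment (node e a b) (node e (a + 1) b)"

definition edge_e2 :: "real \<Rightarrow> int \<Rightarrow> int \<Rightarrow> (real^2) set" where
  "edge_e2 e a b = closed_segment (node e a b) (node e a (b + 1))"

definition edge_e21 :: "real \<Rightarrow> int \<Rightarrow> int \<Rightarrow> (real^2) set" where
  "edge_e21 e a b = closed_segment (node e (a + 1) b) (node e a (b + 1))"

lemma mem_up_tri:
  assumes "e \<noteq> 0"
  shows "p \<in> up_tri e a b \<longleftrightarrow> of_int a \<le> lcoord1 e p \<and> of_int b \<le> lcoord2 e p \<and>
    lcoord1 e p + lcoord2 e p \<le> of_int a + of_int b + 1"
  using mem_lattice_triangle[OF assms, of 1 p "of_int a" "of_int b"]
  by (simp add: up_tri_def node_def algebra_simps)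

lemma mem_down_tri:
  assumes "e \<noteq> 0"
  shows "p \<in> down_tri e a b \<longleftrightarrow> lcoord1 e p \<le> of_int a + 1 \<and> lcoord2 e p \<le> of_int b + 1 \<and>
    of_int a + of_int b + 1 \<le> lcoord1 e p + lcoord2 e p"
  using mem_lattice_triangle[OF assms, of "-1" p "of_int a + 1" "of_int b + 1"]
  by (simp add: down_tri_def node_def algebra_simps)

lemma node_mem_up_tri:
  "e \<noteq> 0 \<Longrightarrow> node e c d \<in> up_tri e a b \<longleftrightarrow> (c, d) \<in> {(a, b), (a + 1, b), (a, b + 1)}"
  by (auto simp: mem_up_tri)

lemma node_mem_down_tri:
  "e \<noteq> 0 \<Longrightarrow> node e c d \<in> down_tri e a b \<longleftrightarrow> (c, d) \<in> {(a + 1, b + 1), (a, b + 1), (a + 1, b)}"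
  by (auto simp: mem_down_tri)

lemma up_tri_eq_iff:
  assumes "e \<noteq> 0"
  shows "up_tri e a b = up_tri e c d \<longleftrightarrow> a = c \<and> b = d"
proof
  assume "up_tri e a b = up_tri e c d"
  hence "node e a b \<in> up_tri e c d" "node e (a + 1) b \<in> up_tri e c d" "node e a (b + 1) \<in> up_tri e c d"
    using node_mem_up_tri[OF assms] by blast+
  thus "a = c \<and> b = d"
    unfolding node_mem_up_tri[OF assms] by auto
qed simp

lemma down_tri_eq_iff:
  assumes "e \<noteq> 0"
  shows "down_tri e a b = down_tri e c d \<longleftrightarrow> a = c \<and> b = d"
proof
  assume "down_tri e a b = down_tri e c d"
  hence "node e (a + 1) (b + 1) \<in> down_tri e c d" "node e a (b + 1) \<in> down_tri e c d"
      "node e (a + 1) b \<in> down_tri e c d"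
    using node_mem_down_tri[OF assms] by blast+
  thus "a = c \<and> b = d"
    unfolding node_mem_down_tri[OF assms] by auto
qed simp

lemma up_tri_neq_down_tri:
  assumes "e \<noteq> 0"
  shows "up_tri e a b \<noteq> down_tri e c d"
proof
  assume "up_tri e a b = down_tri e c d"
  hence "node e a b \<in> down_tri e c d" "node e (a + 1) b \<in> down_tri e c d" "node e a (b + 1) \<in> down_tri e c d"
    using node_mem_up_tri[OF assms] by blast+
  thus False
    unfolding node_mem_down_tri[OF assms] by auto
qed

lemma closed_segment_subset_convex_iff:
  "convex S \<Longrightarrow> closed_segment p q \<subseteq> S \<longleftrightarrow> p \<in> S \<and> q \<in> S"
  using closed_segment_subset ends_in_segment by blast

lemma edge_subset_tri_iff:
  assumes "e \<noteq> 0"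
  shows "edge_e1 e c d \<subseteq> up_tri e a b \<longleftrightarrow> a = c \<and> b = d"
    and "edge_e2 e c d \<subseteq> up_tri e a b \<longleftrightarrow> a = c \<and> b = d"
    and "edge_e21 e c d \<subseteq> up_tri e a b \<longleftrightarrow> a = c \<and> b = d"
    and "edge_e1 e c d \<subseteq> down_tri e a b \<longleftrightarrow> a = c \<and> b + 1 = d"
    and "edge_e2 e c d \<subseteq> down_tri e a b \<longleftrightarrow> a + 1 = c \<and> b = d"
    and "edge_e21 e c d \<subseteq> down_tri e a b \<longleftrightarrow> a = c \<and> b = d"
  unfolding edge_e1_def edge_e2_def edge_e21_def
  by (auto simp: closed_segment_subset_convex_iff up_tri_def down_tri_def
      node_mem_up_tri[OF assms, unfolded up_tri_def] node_mem_down_tri[OF assms, unfolded down_tri_def])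

lemma up_tri_inter_down_tri:
  assumes "e \<noteq> 0"
  shows "up_tri e a b \<inter> down_tri e a (b - 1) = edge_e1 e a b"
    and "up_tri e a b \<inter> down_tri e (a - 1) b = edge_e2 e a b"
    and "up_tri e a b \<inter> down_tri e a b = edge_e21 e a b"
proof -
  have [simp]: "convex (up_tri e a b)" "convex (down_tri e c d)" for a b c d
    by (simp_all add: up_tri_def down_tri_def convex_convex_hull)
  have sub: "edge_e1 e a b \<subseteq> up_tri e a b \<inter> down_tri e a (b - 1)"
      "edge_e2 e a b \<subseteq> up_tri e a b \<inter> down_tri e (a - 1) b"
      "edge_e21 e a b \<subseteq> up_tri e a b \<inter> down_tri e a b"
    by (simp_all add: edge_subset_tri_iff[OF assms])
  note mem = mem_up_tri[OF assms] mem_down_tri[OF assms]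
  show "up_tri e a b \<inter> down_tri e a (b - 1) = edge_e1 e a b"
  proof (rule equalityI[OF subsetI sub(1)])
    fix p assume "p \<in> up_tri e a b \<inter> down_tri e a (b - 1)"
    thus "p \<in> edge_e1 e a b"
      unfolding edge_e1_def node_def
      by (intro mem_lattice_segmentI[OF assms, of "lcoord1 e p - of_int a"]) (auto simp: mem)
  qed
  show "up_tri e a b \<inter> down_tri e (a - 1) b = edge_e2 e a b"
  proof (rule equalityI[OF subsetI sub(2)])
    fix p assume "p \<in> up_tri e a b \<inter> down_tri e (a - 1) b"
    thus "p \<in> edge_e2 e a b"
      unfolding edge_e2_def node_def
      by (intro mem_lattice_segmentI[OF assms, of "lcoord2 e p - of_int b"]) (auto simp: mem)
  qed
  show "up_tri e a b \<inter> down_tri e a b = edge_e21 e a b"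
  proof (rule equalityI[OF subsetI sub(3)])
    fix p assume "p \<in> up_tri e a b \<inter> down_tri e a b"
    thus "p \<in> edge_e21 e a b"
      unfolding edge_e21_def node_def
      by (intro mem_lattice_segmentI[OF assms, of "lcoord2 e p - of_int b"]) (auto simp: mem)
  qed
qed

lemma edges_eps_iff:
  assumes "e > 0"
  shows "E \<in> edges_eps e \<longleftrightarrow> (\<exists>a b. E = edge_e1 e a b \<or> E = edge_e2 e a b \<or> E = edge_e21 e a b)"
proof
  assume "E \<in> edges_eps e"
  then obtain a b c d where E: "E = closed_segment (node e a b) (node e c d)"
    and "dist (node e a b) (node e c d) = e"
    unfolding edges_eps_def lattice_eps_eq by blast
  moreover obtain x y where c: "c = a + x" "d = b + y"
    by (metis add.commute diff_add_cancel)
  ultimately have E: "E = closed_segment (node e a b) (node e (a + x) (b + y))" and "lnorm2 x y = 1"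
    using dist_node_eq_iff[OF assms] by simp_all
  from this(2) have "(x, y) \<in> {(1, 0), (-1, 0), (0, 1), (0, -1), (1, -1), (-1, 1)}"
    by (rule lnorm2_eq_1_cases)
  hence "E = edge_e1 e (a + min 0 x) (b + min 0 y) \<or> E = edge_e2 e (a + min 0 x) (b + min 0 y) \<or>
      E = edge_e21 e (a + min 0 x) (b + min 0 y)"
    unfolding E edge_e1_def edge_e2_def edge_e21_def
    by (elim insertE emptyE) (auto simp: closed_segment_commute)
  thus "\<exists>a b. E = edge_e1 e a b \<or> E = edge_e2 e a b \<or> E = edge_e21 e a b"
    by blast
next
  assume "\<exists>a b. E = edge_e1 e a b \<or> E = edge_e2 e a b \<or> E = edge_e21 e a b"
  moreover have "closed_segment (node e a b) (node e c d) \<in> edges_eps e" if "lnorm2 (c - a) (d - b) = 1" for a b c d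
    unfolding edges_eps_def lattice_eps_eq using that dist_node_eq_iff[OF assms] by blast
  ultimately show "E \<in> edges_eps e"
    unfolding edge_e1_def edge_e2_def edge_e21_def by (auto simp: lnorm2_def)
qed

lemma triangles_eps_iff:
  assumes "e > 0"
  shows "T \<in> triangles_eps e \<longleftrightarrow> (\<exists>a b. T = up_tri e a b \<or> T = down_tri e a b)"
proof
  assume "T \<in> triangles_eps e"
  then obtain a1 a2 b1 b2 c1 c2 where T: "T = convex hull {node e a1 a2, node e b1 b2, node e c1 c2}"
    and "dist (node e a1 a2) (node e b1 b2) = e" "dist (node e b1 b2) (node e c1 c2) = e"
      "dist (node e a1 a2) (node e c1 c2) = e"
    unfolding triangles_eps_def lattice_eps_eq by blast
  then obtain i j where "{(a1, a2), (b1, b2), (c1, c2)} = {(i, j), (i + 1, j), (i, j + 1)} \<or>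
      {(a1, a2), (b1, b2), (c1, c2)} = {(i + 1, j + 1), (i, j + 1), (i + 1, j)}"
    using unit_triangle_int unfolding dist_node_eq_iff[OF assms] by metis
  hence "(\<lambda>(i, j). node e i j) ` {(a1, a2), (b1, b2), (c1, c2)} = (\<lambda>(i, j). node e i j) ` {(i, j), (i + 1, j), (i, j + 1)} \<or>
      (\<lambda>(i, j). node e i j) ` {(a1, a2), (b1, b2), (c1, c2)} = (\<lambda>(i, j). node e i j) ` {(i + 1, j + 1), (i, j + 1), (i + 1, j)}"
    by metis
  hence "T = up_tri e i j \<or> T = down_tri e i j"
    unfolding T up_tri_def down_tri_def by auto
  thus "\<exists>a b. T = up_tri e a b \<or> T = down_tri e a b"
    by blast
next
  assume "\<exists>a b. T = up_tri e a b \<or> T = down_tri e a b"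
  moreover have "convex hull {node e a1 a2, node e b1 b2, node e c1 c2} \<in> triangles_eps e"
    if "lnorm2 (b1 - a1) (b2 - a2) = 1" "lnorm2 (c1 - b1) (c2 - b2) = 1" "lnorm2 (c1 - a1) (c2 - a2) = 1"
    for a1 a2 b1 b2 c1 c2
    unfolding triangles_eps_def lattice_eps_eq using that dist_node_eq_iff[OF assms] by blast
  ultimately show "T \<in> triangles_eps e"
    unfolding up_tri_def down_tri_def by (auto simp: lnorm2_def)
qed

lemma tri_edges_up_tri:
  assumes "e > 0"
  shows "tri_edges e (up_tri e a b) = {edge_e1 e a b, edge_e2 e a b, edge_e21 e a b}"
proof -
  have "e \<noteq> 0"
    using assms by simp
  hence sub: "edge_e1 e a b \<subseteq> up_tri e a b" "edge_e2 e a b \<subseteq> up_tri e a b" "edge_e21 e a b \<subseteq> up_tri e a b"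
    by (simp_all add: edge_subset_tri_iff)
  with \<open>e \<noteq> 0\<close> show ?thesis
    unfolding tri_edges_def edges_eps_iff[OF assms] by (auto simp: edge_subset_tri_iff intro: sub[THEN subsetD])
qed

lemma tri_edges_down_tri:
  assumes "e > 0"
  shows "tri_edges e (down_tri e a b) = {edge_e1 e a (b + 1), edge_e2 e (a + 1) b, edge_e21 e a b}"
proof -
  have "e \<noteq> 0"
    using assms by simp
  hence sub: "edge_e1 e a (b + 1) \<subseteq> down_tri e a b" "edge_e2 e (a + 1) b \<subseteq> down_tri e a b"
      "edge_e21 e a b \<subseteq> down_tri e a b"
    by (simp_all add: edge_subset_tri_iff)
  with \<open>e \<noteq> 0\<close> show ?thesis
    unfolding tri_edges_def edges_eps_iff[OF assms] by (auto simp: edge_subset_tri_iff intro: sub[THEN subsetD])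
qed

lemma edge_kinds_distinct:
  assumes "e \<noteq> 0"
  shows "edge_e1 e a b \<noteq> edge_e2 e c d" "edge_e1 e a b \<noteq> edge_e21 e c d" "edge_e2 e a b \<noteq> edge_e21 e c d"
  using assms by (auto simp: edge_e1_def edge_e2_def edge_e21_def doubleton_eq_iff node_eq_iff)

lemma card_tri_edges:
  assumes "e > 0" and "T \<in> triangles_eps e"
  shows "card (tri_edges e T) = 3"
  using assms edge_kinds_distinct[of e] edge_kinds_distinct[of e, THEN not_sym]
  by (auto simp: triangles_eps_iff tri_edges_up_tri tri_edges_down_tri)

lemma tri_edges_eq_sides:
  assumes "e > 0" and "T \<in> triangles_eps e"
  obtains A B C where "A \<in> lattice_eps e" "B \<in> lattice_eps e" "C \<in> lattice_eps e"
    and "tri_edges e T = {closed_segment A B, closed_segment B C, closed_segment A C}"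
proof -
  obtain a b where "T = up_tri e a b \<or> T = down_tri e a b"
    using assms triangles_eps_iff by blast
  thus thesis
  proof
    assume "T = up_tri e a b"
    thus thesis
      using assms(1) by (intro that[of "node e a b" "node e (a + 1) b" "node e a (b + 1)"])
        (auto simp: lattice_eps_eq tri_edges_up_tri edge_e1_def edge_e2_def edge_e21_def)
  next
    assume "T = down_tri e a b"
    thus thesis
      using assms(1) by (intro that[of "node e a (b + 1)" "node e (a + 1) (b + 1)" "node e (a + 1) b"])
        (auto simp: lattice_eps_eq tri_edges_down_tri edge_e1_def edge_e2_def edge_e21_def closed_segment_commute)
  qed
qed

lemma edge_in_two_triangles:
  assumes "e > 0" and "E \<in> edges_eps e"
  obtains X Y where "X \<in> triangles_eps e" "Y \<in> triangles_eps e" "X \<noteq> Y" "X \<inter> Y = E"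
    and "\<And>T. T \<in> triangles_eps e \<Longrightarrow> E \<subseteq> T \<longleftrightarrow> T = X \<or> T = Y"
proof -
  have e: "e \<noteq> 0"
    using assms(1) by simp
  note simps = up_tri_inter_down_tri[OF e] edge_subset_tri_iff[OF e] eq_diff_eq
  obtain c d c' d' where E: "E = up_tri e c d \<inter> down_tri e c' d'"
    and up: "\<And>a b. E \<subseteq> up_tri e a b \<longleftrightarrow> a = c \<and> b = d"
    and down: "\<And>a b. E \<subseteq> down_tri e a b \<longleftrightarrow> a = c' \<and> b = d'"
  proof -
    obtain c d where "E = edge_e1 e c d \<or> E = edge_e2 e c d \<or> E = edge_e21 e c d"
      using assms edges_eps_iff by blast
    thus thesis
    proof (elim disjE)
      assume "E = edge_e1 e c d"
      thus thesis
        by (intro that[of c d c "d - 1"]) (simp_all add: simps)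
    next
      assume "E = edge_e2 e c d"
      thus thesis
        by (intro that[of c d "c - 1" d]) (simp_all add: simps)
    next
      assume "E = edge_e21 e c d"
      thus thesis
        by (intro that[of c d c d]) (simp_all add: simps)
    qed
  qed
  have tri: "up_tri e a b \<in> triangles_eps e" "down_tri e a b \<in> triangles_eps e" for a b
    using triangles_eps_iff[OF assms(1)] by blast+
  show thesis
  proof (rule that[OF tri(1) tri(2) up_tri_neq_down_tri[OF e] E[symmetric]])
    fix T assume "T \<in> triangles_eps e"
    then obtain a b where "T = up_tri e a b \<or> T = down_tri e a b"
      using triangles_eps_iff[OF assms(1)] by blast
    thus "E \<subseteq> T \<longleftrightarrow> T = up_tri e c d \<or> T = down_tri e c' d'"
      using up down up_tri_eq_iff[OF e] down_tri_eq_iff[OF e] up_tri_neq_down_tri[OF e]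
      by (metis (no_types))
  qed
qed

(* The instances of this lemma below supply the integrality that linarith cannot see. *)
lemma of_int_less_plus_one_imp_le: "real_of_int m < of_int n + 1 \<Longrightarrow> m \<le> n"
  by linarith

lemma up_tri_centroid:
  assumes "e \<noteq> 0"
  shows "lpoint e (of_int a + 1/3) (of_int b + 1/3) \<in> up_tri e c d \<longleftrightarrow> c = a \<and> d = b"
    and "lpoint e (of_int a + 1/3) (of_int b + 1/3) \<notin> down_tri e c d"
proof -
  note mem = mem_up_tri[OF assms] mem_down_tri[OF assms] lcoord_lpoint[OF assms]
  show "lpoint e (of_int a + 1/3) (of_int b + 1/3) \<in> up_tri e c d \<longleftrightarrow> c = a \<and> d = b"
    unfolding mem using of_int_less_plus_one_imp_le[of c a] of_int_less_plus_one_imp_le[of d b]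
      of_int_less_plus_one_imp_le[of "a + b" "c + d"] by (auto; linarith)
  show "lpoint e (of_int a + 1/3) (of_int b + 1/3) \<notin> down_tri e c d"
    unfolding mem using of_int_less_plus_one_imp_le[of a c] of_int_less_plus_one_imp_le[of b d]
      of_int_less_plus_one_imp_le[of "c + d + 1" "a + b"] by (auto; linarith)
qed

lemma down_tri_centroid:
  assumes "e \<noteq> 0"
  shows "lpoint e (of_int a + 2/3) (of_int b + 2/3) \<in> down_tri e c d \<longleftrightarrow> c = a \<and> d = b"
    and "lpoint e (of_int a + 2/3) (of_int b + 2/3) \<notin> up_tri e c d"
proof -
  note mem = mem_up_tri[OF assms] mem_down_tri[OF assms] lcoord_lpoint[OF assms]
  show "lpoint e (of_int a + 2/3) (of_int b + 2/3) \<in> down_tri e c d \<longleftrightarrow> c = a \<and> d = b"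
    unfolding mem using of_int_less_plus_one_imp_le[of a c] of_int_less_plus_one_imp_le[of b d]
      of_int_less_plus_one_imp_le[of "c + d" "a + b"] by (auto; linarith)
  show "lpoint e (of_int a + 2/3) (of_int b + 2/3) \<notin> up_tri e c d"
    unfolding mem using of_int_less_plus_one_imp_le[of c a] of_int_less_plus_one_imp_le[of d b]
      of_int_less_plus_one_imp_le[of "a + b + 1" "c + d"] by (auto; linarith)
qed

lemma triangle_private_point:
  assumes "e > 0" and "T \<in> triangles_eps e"
  obtains p where "p \<in> T" and "\<And>T'. T' \<in> triangles_eps e \<Longrightarrow> p \<in> T' \<Longrightarrow> T' = T"
proof -
  have e: "e \<noteq> 0"
    using assms(1) by simp
  have tri: "\<exists>c d. T' = up_tri e c d \<or> T' = down_tri e c d" if "T' \<in> triangles_eps e" for T'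
    using that triangles_eps_iff[OF assms(1)] by blast
  obtain a b where "T = up_tri e a b \<or> T = down_tri e a b"
    using tri[OF assms(2)] by blast
  thus thesis
  proof
    assume T: "T = up_tri e a b"
    define p where "p = lpoint e (of_int a + 1/3) (of_int b + 1/3)"
    show thesis
    proof (rule that)
      show "p \<in> T"
        unfolding T p_def up_tri_centroid(1)[OF e] by simp
      fix T' assume "T' \<in> triangles_eps e" "p \<in> T'"
      moreover obtain c d where "T' = up_tri e c d \<or> T' = down_tri e c d"
        using tri \<open>T' \<in> triangles_eps e\<close> by blast
      ultimately show "T' = T"
        unfolding T p_def using up_tri_centroid[OF e, of a b c d] by auto
    qed
  next
    assume T: "T = down_tri e a b"
    define p where "p = lpoint e (of_int a + 2/3) (of_int b + 2/3)"
    show thesis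
    proof (rule that)
      show "p \<in> T"
        unfolding T p_def down_tri_centroid(1)[OF e] by simp
      fix T' assume "T' \<in> triangles_eps e" "p \<in> T'"
      moreover obtain c d where "T' = up_tri e c d \<or> T' = down_tri e c d"
        using tri \<open>T' \<in> triangles_eps e\<close> by blast
      ultimately show "T' = T"
        unfolding T p_def using down_tri_centroid[OF e, of a b c d] by auto
    qed
  qed
qed

lemma triangle_subset_Union:
  assumes "e > 0" and "T \<in> triangles_eps e" and "F \<subseteq> triangles_eps e" and "T \<subseteq> \<Union>F"
  shows "T \<in> F"
proof -
  obtain p where "p \<in> T" and p: "\<And>T'. T' \<in> triangles_eps e \<Longrightarrow> p \<in> T' \<Longrightarrow> T' = T"
    using triangle_private_point[OF assms(1,2)] by blast
  then obtain T' where "T' \<in> F" "p \<in> T'"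
    using assms(4) by blast
  thus ?thesis
    using p assms(3) by blast
qed

lemma lcoord_bounds_in_triangle:
  assumes "e \<noteq> 0" and "p \<in> up_tri e a b \<or> p \<in> down_tri e a b"
  shows "of_int a \<le> lcoord1 e p" "lcoord1 e p \<le> of_int a + 1"
    and "of_int b \<le> lcoord2 e p" "lcoord2 e p \<le> of_int b + 1"
  using assms(2) unfolding mem_up_tri[OF assms(1)] mem_down_tri[OF assms(1)] by linarith+

lemma bounded_linear_lcoord: "bounded_linear (lcoord1 e)" "bounded_linear (lcoord2 e)"
proof -
  have "linear (lcoord1 e)" "linear (lcoord2 e)"
    by (auto intro!: linearI simp: lcoord1_def lcoord2_def add_divide_distrib diff_divide_distrib algebra_simps)
  thus "bounded_linear (lcoord1 e)" "bounded_linear (lcoord2 e)"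
    by (simp_all add: linear_conv_bounded_linear)
qed

lemma finite_triangles_meeting:
  assumes "e > 0" and "bounded S"
  shows "finite {T \<in> triangles_eps e. T \<inter> S \<noteq> {}}"
proof -
  have e: "e \<noteq> 0"
    using assms(1) by simp
  obtain K1 K2 where K1: "\<forall>x \<in> lcoord1 e ` S. norm x \<le> K1" and K2: "\<forall>x \<in> lcoord2 e ` S. norm x \<le> K2"
    using bounded_linear_image[OF assms(2) bounded_linear_lcoord(1)]
      bounded_linear_image[OF assms(2) bounded_linear_lcoord(2)] unfolding bounded_iff by metis
  define M where "M = \<lceil>max K1 K2\<rceil> + 1"
  define box where "box = {-M..M} \<times> {-M..M}"
  have "{T \<in> triangles_eps e. T \<inter> S \<noteq> {}} \<subseteq>
      (\<lambda>(a, b). up_tri e a b) ` box \<union> (\<lambda>(a, b). down_tri e a b) ` box"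
  proof
    fix T assume "T \<in> {T \<in> triangles_eps e. T \<inter> S \<noteq> {}}"
    then obtain p where "T \<in> triangles_eps e" "p \<in> T" "p \<in> S"
      by blast
    obtain a b where T: "T = up_tri e a b \<or> T = down_tri e a b"
      using \<open>T \<in> triangles_eps e\<close> triangles_eps_iff[OF assms(1)] by blast
    have "of_int a \<le> lcoord1 e p" "lcoord1 e p \<le> of_int a + 1"
        "of_int b \<le> lcoord2 e p" "lcoord2 e p \<le> of_int b + 1"
      using T \<open>p \<in> T\<close> lcoord_bounds_in_triangle[OF e, of p a b] by blast+
    moreover have "\<bar>lcoord1 e p\<bar> \<le> K1" "\<bar>lcoord2 e p\<bar> \<le> K2"
      using K1 K2 \<open>p \<in> S\<close> by auto
    moreover have "max K1 K2 \<le> of_int \<lceil>max K1 K2\<rceil>"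
      by (rule le_of_int_ceiling)
    ultimately have "(a, b) \<in> box"
      unfolding box_def M_def by (simp, linarith)
    thus "T \<in> (\<lambda>(a, b). up_tri e a b) ` box \<union> (\<lambda>(a, b). down_tri e a b) ` box"
      using T by force
  qed
  thus ?thesis
    by (rule finite_subset) (simp add: box_def)
qed

section \<open>Frustrated edges and interpolation regions\<close>

lemma N_eps_opposite_spins:
  assumes "closed_segment p q \<in> N_eps e u"
  shows "u p = - u q"
proof -
  obtain i j where "closed_segment i j = closed_segment p q" "u i = - u j"
    using assms unfolding N_eps_def by blast
  hence "{i, j} = {p, q}" "u i = - u j"
    by simp_all
  thus ?thesis
    by (metis doubleton_eq_iff minus_minus)
qed

lemma N_eps_subset_edges_eps: "N_eps e u \<subseteq> edges_eps e"
  unfolding N_eps_def edges_eps_def by blast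

lemma card_tri_edges_N_eps_le_2:
  assumes "e > 0" and "u \<in> SF_eps e \<Omega>" and "T \<in> triangles_eps e"
  shows "card (tri_edges e T \<inter> N_eps e u) \<le> 2"
proof -
  obtain A B C where "C \<in> lattice_eps e"
    and sides: "tri_edges e T = {closed_segment A B, closed_segment B C, closed_segment A C}"
    using tri_edges_eq_sides[OF assms(1,3)] by metis
  hence "norm (u C) = 1"
    using assms(2) unfolding SF_eps_def by blast
  have "\<not> tri_edges e T \<subseteq> N_eps e u"
  proof
    assume "tri_edges e T \<subseteq> N_eps e u"
    hence "u A = - u B" "u B = - u C" "u A = - u C"
      unfolding sides by (auto intro: N_eps_opposite_spins)
    hence "u C + u C = 0"
      by (metis add.inverse_inverse neg_eq_iff_add_eq_0)
    hence "u C = 0"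
      by (metis scaleR_2 scaleR_eq_0_iff zero_neq_numeral)
    thus False
      using \<open>norm (u C) = 1\<close> by simp
  qed
  then obtain E where "E \<in> tri_edges e T" "E \<notin> N_eps e u"
    by blast
  hence "tri_edges e T \<inter> N_eps e u \<subseteq> tri_edges e T - {E}"
    by blast
  hence "card (tri_edges e T \<inter> N_eps e u) \<le> card (tri_edges e T - {E})"
    by (rule card_mono[rotated]) (simp add: sides)
  also have "\<dots> = 2"
    using card_tri_edges[OF assms(1,3)] \<open>E \<in> tri_edges e T\<close> by (simp add: sides)
  finally show ?thesis .
qed

lemma card_tri_edges_C_eps:
  assumes "e > 0" and "T \<in> triangles_eps e"
  shows "card (tri_edges e T \<inter> C_eps e u) = 3 - card (tri_edges e T \<inter> N_eps e u)"
proof -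
  have "tri_edges e T \<inter> C_eps e u = tri_edges e T - (tri_edges e T \<inter> N_eps e u)"
    unfolding C_eps_def tri_edges_def by blast
  moreover have "finite (tri_edges e T)"
    using card_tri_edges[OF assms] by (metis card.infinite zero_neq_numeral)
  ultimately show ?thesis
    using card_tri_edges[OF assms] by (simp add: card_Diff_subset)
qed

lemma N_eps_meets_domain:
  assumes "u \<in> SF_eps e \<Omega>" and "E \<in> N_eps e u"
  shows "E \<inter> \<Omega> \<noteq> {}"
proof -
  obtain i j where E: "E = closed_segment i j" and "i \<in> lattice_eps e" "j \<in> lattice_eps e"
    and "u i = - u j"
    using assms(2) unfolding N_eps_def by blast
  have "nvec \<noteq> - nvec"
    by (simp add: nvec_def vec_eq_iff forall_3)
  have "i \<in> \<Omega> \<or> j \<in> \<Omega>"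
  proof (rule ccontr)
    assume "\<not> (i \<in> \<Omega> \<or> j \<in> \<Omega>)"
    hence "u i = nvec" "u j = nvec"
      using assms(1) \<open>i \<in> lattice_eps e\<close> \<open>j \<in> lattice_eps e\<close> unfolding SF_eps_def by auto
    thus False
      using \<open>u i = - u j\<close> \<open>nvec \<noteq> - nvec\<close> by simp
  qed
  thus ?thesis
    unfolding E using ends_in_segment by blast
qed

lemma triangle_notin_edges_eps:
  assumes "e > 0" and "T \<in> triangles_eps e"
  shows "T \<notin> edges_eps e"
proof
  assume "T \<in> edges_eps e"
  then obtain X Y where XY: "X \<in> triangles_eps e" "Y \<in> triangles_eps e" "X \<noteq> Y" "X \<inter> Y = T"
    by (rule edge_in_two_triangles[OF assms(1)])
  have "T = X" "T = Y"
    using triangle_subset_Union[OF assms(1,2), of "{X}"] triangle_subset_Union[OF assms(1,2), of "{Y}"] XY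
    by auto
  thus False
    using \<open>X \<noteq> Y\<close> by simp
qed

lemma neighbours_sym: "neighbours e u T T' \<Longrightarrow> neighbours e u T' T"
  unfolding neighbours_def by (simp add: Int_commute)

lemma neighbours_irrefl:
  assumes "e > 0"
  shows "\<not> neighbours e u T T"
  using triangle_notin_edges_eps[OF assms, of T] N_eps_subset_edges_eps[of e u]
  unfolding neighbours_def by auto

lemma bij_betw_neighbours_N_eps:
  assumes "e > 0" and "T \<in> triangles_eps e"
  shows "bij_betw (\<lambda>T'. T \<inter> T') {T'. neighbours e u T T'} (tri_edges e T \<inter> N_eps e u)"
proof (rule bij_betw_imageI)
  show "inj_on (\<lambda>T'. T \<inter> T') {T'. neighbours e u T T'}"
  proof (rule inj_onI)
    fix T1 T2 assume T12: "T1 \<in> {T'. neighbours e u T T'}" "T2 \<in> {T'. neighbours e u T T'}"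
      and eq: "T \<inter> T1 = T \<inter> T2"
    have "T \<inter> T1 \<in> edges_eps e"
      using T12(1) N_eps_subset_edges_eps unfolding neighbours_def by auto
    then obtain X Y where XY: "\<And>T'. T' \<in> triangles_eps e \<Longrightarrow> T \<inter> T1 \<subseteq> T' \<longleftrightarrow> T' = X \<or> T' = Y"
      by (rule edge_in_two_triangles[OF assms(1)]) blast
    have "T1 \<in> triangles_eps e" "T2 \<in> triangles_eps e" "T1 \<noteq> T" "T2 \<noteq> T"
      using T12 neighbours_irrefl[OF assms(1)] unfolding neighbours_def by auto
    thus "T1 = T2"
      using XY[of T] XY[of T1] XY[of T2] assms(2) eq by blast
  qed
  show "(\<lambda>T'. T \<inter> T') ` {T'. neighbours e u T T'} = tri_edges e T \<inter> N_eps e u"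
  proof
    show "(\<lambda>T'. T \<inter> T') ` {T'. neighbours e u T T'} \<subseteq> tri_edges e T \<inter> N_eps e u"
      unfolding neighbours_def tri_edges_def using N_eps_subset_edges_eps by auto
    show "tri_edges e T \<inter> N_eps e u \<subseteq> (\<lambda>T'. T \<inter> T') ` {T'. neighbours e u T T'}"
    proof
      fix E assume E: "E \<in> tri_edges e T \<inter> N_eps e u"
      hence "E \<in> edges_eps e" "E \<subseteq> T"
        unfolding tri_edges_def by auto
      then obtain X Y where "X \<in> triangles_eps e" "Y \<in> triangles_eps e" "X \<inter> Y = E"
        and "T = X \<or> T = Y"
        using edge_in_two_triangles[OF assms(1)] assms(2) by metis
      then obtain T' where "T' \<in> triangles_eps e" "T \<inter> T' = E"
        by (metis Int_commute)
      moreover from this have "neighbours e u T T'"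
        unfolding neighbours_def using assms(2) E by simp
      ultimately show "E \<in> (\<lambda>T'. T \<inter> T') ` {T'. neighbours e u T T'}"
        by force
    qed
  qed
qed

lemma card_neighbours:
  assumes "e > 0" and "T \<in> triangles_eps e"
  shows "card {T'. neighbours e u T T'} = card (tri_edges e T \<inter> N_eps e u)"
  using bij_betw_same_card[OF bij_betw_neighbours_N_eps[OF assms]] .

lemma neighbours_rtranclp_triangles:
  "(neighbours e u)\<^sup>*\<^sup>* T0 T \<Longrightarrow> T0 \<in> triangles_eps e \<Longrightarrow> T \<in> triangles_eps e"
  by (induction rule: rtranclp_induct) (auto simp: neighbours_def)

lemma pc_union_component:
  assumes "T0 \<in> triangles_eps e"
  shows "pc_union e u (\<Union>{T. (neighbours e u)\<^sup>*\<^sup>* T0 T})"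
  unfolding pc_union_def tri_connected_def
proof (intro exI conjI ballI)
  show "{T. (neighbours e u)\<^sup>*\<^sup>* T0 T} \<subseteq> triangles_eps e"
    using neighbours_rtranclp_triangles assms by blast
  fix T1 T2 assume T12: "T1 \<in> {T. (neighbours e u)\<^sup>*\<^sup>* T0 T}" "T2 \<in> {T. (neighbours e u)\<^sup>*\<^sup>* T0 T}"
  moreover have "symp (neighbours e u)"
    by (rule sympI) (rule neighbours_sym)
  ultimately show "(neighbours e u)\<^sup>*\<^sup>* T1 T2"
    by (metis mem_Collect_eq rtranclp_trans symp_rtranclp sympD)
  show "T1 \<in> triangles_eps e" "T2 \<in> triangles_eps e"
    using neighbours_rtranclp_triangles assms T12 by blast+
qed simp

lemma region_eq_component:
  assumes "e > 0" and "R \<in> regions_eps e u"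
  obtains T0 where "T0 \<in> triangles_eps e" and "R = \<Union>{T. (neighbours e u)\<^sup>*\<^sup>* T0 T}"
proof -
  obtain F where F: "F \<subseteq> triangles_eps e" "\<forall>T1\<in>F. \<forall>T2\<in>F. tri_connected e u T1 T2" "R = \<Union>F"
    using assms(2) unfolding regions_eps_def pc_union_def by blast
  have maximal: "R' = R" if "pc_union e u R'" "R \<subseteq> R'" for R'
    using assms(2) that unfolding regions_eps_def by blast
  have "F \<noteq> {}"
  proof
    assume "F = {}"
    moreover have "up_tri e 0 0 \<in> triangles_eps e"
      using triangles_eps_iff[OF assms(1)] by blast
    ultimately have "\<Union>{T. (neighbours e u)\<^sup>*\<^sup>* (up_tri e 0 0) T} = {}"
      using maximal[OF pc_union_component] F(3) by blast
    moreover have "node e 0 0 \<in> up_tri e 0 0"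
      using node_mem_up_tri assms(1) by simp
    ultimately show False
      by blast
  qed
  then obtain T0 where "T0 \<in> F"
    by blast
  hence "F \<subseteq> {T. (neighbours e u)\<^sup>*\<^sup>* T0 T}"
    using F(2) unfolding tri_connected_def by blast
  hence "R = \<Union>{T. (neighbours e u)\<^sup>*\<^sup>* T0 T}"
    using maximal[OF pc_union_component] F \<open>T0 \<in> F\<close> by blast
  thus thesis
    using that F(1) \<open>T0 \<in> F\<close> by blast
qed

lemma triangle_subset_component_iff:
  assumes "e > 0" and "T0 \<in> triangles_eps e" and "T \<in> triangles_eps e"
  shows "T \<subseteq> \<Union>{T. (neighbours e u)\<^sup>*\<^sup>* T0 T} \<longleftrightarrow> (neighbours e u)\<^sup>*\<^sup>* T0 T"
  using triangle_subset_Union[OF assms(1,3), of "{T. (neighbours e u)\<^sup>*\<^sup>* T0 T}"]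
    neighbours_rtranclp_triangles[OF _ assms(2)] by blast

lemma Union_component_in_triangles_iff:
  assumes "e > 0" and "T0 \<in> triangles_eps e"
  shows "\<Union>{T. (neighbours e u)\<^sup>*\<^sup>* T0 T} \<in> triangles_eps e \<longleftrightarrow> {T. (neighbours e u)\<^sup>*\<^sup>* T0 T} = {T0}"
proof
  assume R: "\<Union>{T. (neighbours e u)\<^sup>*\<^sup>* T0 T} \<in> triangles_eps e"
  have "T = \<Union>{T. (neighbours e u)\<^sup>*\<^sup>* T0 T}" if "(neighbours e u)\<^sup>*\<^sup>* T0 T" for T
    using triangle_subset_Union[OF assms(1) neighbours_rtranclp_triangles[OF that assms(2)], of "{_}"] R that
    by blast
  thus "{T. (neighbours e u)\<^sup>*\<^sup>* T0 T} = {T0}"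
    by blast
qed (use assms in simp)

lemma finite_component:
  assumes "e > 0" and "bounded \<Omega>" and "u \<in> SF_eps e \<Omega>" and "T0 \<in> triangles_eps e"
  shows "finite {T. (neighbours e u)\<^sup>*\<^sup>* T0 T}"
proof (rule finite_subset)
  show "{T. (neighbours e u)\<^sup>*\<^sup>* T0 T} \<subseteq> insert T0 {T \<in> triangles_eps e. T \<inter> \<Omega> \<noteq> {}}"
  proof
    fix T assume "T \<in> {T. (neighbours e u)\<^sup>*\<^sup>* T0 T}"
    hence "T = T0 \<or> (\<exists>T'. neighbours e u T T')"
      by (auto elim: rtranclp.cases intro: neighbours_sym)
    moreover have "T \<inter> \<Omega> \<noteq> {}" if "neighbours e u T T'" for T'
      using that N_eps_meets_domain[OF assms(3)] unfolding neighbours_def by blast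
    ultimately show "T \<in> insert T0 {T \<in> triangles_eps e. T \<inter> \<Omega> \<noteq> {}}"
      unfolding neighbours_def by blast
  qed
  show "finite (insert T0 {T \<in> triangles_eps e. T \<inter> \<Omega> \<noteq> {}})"
    using finite_triangles_meeting[OF assms(1,2)] by simp
qed

theorem lemma5p1:
  fixes \<epsilon> :: real and \<Omega> :: "(real^2) set" and u :: "real^2 \<Rightarrow> real^3" and R :: "(real^2) set"
  assumes "\<epsilon> > 0" and "open \<Omega>" and "bounded \<Omega>"
    and "u \<in> SF_eps \<epsilon> \<Omega>" and "R \<in> regions_eps \<epsilon> u"
  defines "P1 \<equiv> R \<in> triangles_eps \<epsilon>"
    and "P2 \<equiv> (\<forall>T \<in> triangles_eps \<epsilon>. T \<subseteq> R \<longrightarrow> card (tri_edges \<epsilon> T \<inter> N_eps \<epsilon> u) = 2)"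
    and "P3 \<equiv> (card {T \<in> triangles_eps \<epsilon>. T \<subseteq> R \<and> card (tri_edges \<epsilon> T \<inter> C_eps \<epsilon> u) = 2} = 2 \<and>
              (\<forall>T \<in> triangles_eps \<epsilon>. T \<subseteq> R \<and> card (tri_edges \<epsilon> T \<inter> C_eps \<epsilon> u) \<noteq> 2
                  \<longrightarrow> card (tri_edges \<epsilon> T \<inter> N_eps \<epsilon> u) = 2))"
  shows "(P1 \<and> \<not> P2 \<and> \<not> P3) \<or> (\<not> P1 \<and> P2 \<and> \<not> P3) \<or> (\<not> P1 \<and> \<not> P2 \<and> P3)"
proof -
  obtain T0 where T0: "T0 \<in> triangles_eps \<epsilon>" and R: "R = \<Union>{T. (neighbours \<epsilon> u)\<^sup>*\<^sup>* T0 T}"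
    by (rule region_eq_component[OF assms(1,5)])
  define C where "C = {T. (neighbours \<epsilon> u)\<^sup>*\<^sup>* T0 T}"
  define d where "d T = card (tri_edges \<epsilon> T \<inter> N_eps \<epsilon> u)" for T
  have C_tri: "T \<in> C \<Longrightarrow> T \<in> triangles_eps \<epsilon>" for T
    using neighbours_rtranclp_triangles T0 unfolding C_def by blast
  have sub: "T \<in> triangles_eps \<epsilon> \<Longrightarrow> T \<subseteq> R \<longleftrightarrow> T \<in> C" for T
    unfolding R C_def using triangle_subset_component_iff[OF assms(1) T0] by simp
  have deg: "T \<in> C \<Longrightarrow> card {T'. neighbours \<epsilon> u T T'} = d T" for T
    unfolding d_def using card_neighbours[OF assms(1) C_tri] .
  have fin: "finite C"
    unfolding C_def by (rule finite_component[OF assms(1,3,4) T0])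
  have d2: "T \<in> C \<Longrightarrow> d T \<le> 2" for T
    unfolding d_def using card_tri_edges_N_eps_le_2[OF assms(1,4) C_tri] .
  have C2: "T \<in> C \<Longrightarrow> card (tri_edges \<epsilon> T \<inter> C_eps \<epsilon> u) = 2 \<longleftrightarrow> d T = 1" for T
    using card_tri_edges_C_eps[OF assms(1) C_tri] d2 unfolding d_def by fastforce
  have "P1 \<longleftrightarrow> C = {T0}"
    unfolding P1_def R C_def using Union_component_in_triangles_iff[OF assms(1) T0] .
  moreover have "P2 \<longleftrightarrow> (\<forall>T\<in>C. d T = 2)"
    unfolding P2_def d_def using sub C_tri by blast
  moreover have "P3 \<longleftrightarrow> card {T \<in> C. d T = 1} = 2 \<and> (\<forall>T\<in>C. d T \<noteq> 1 \<longrightarrow> d T = 2)"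
  proof -
    have "{T \<in> triangles_eps \<epsilon>. T \<subseteq> R \<and> card (tri_edges \<epsilon> T \<inter> C_eps \<epsilon> u) = 2} = {T \<in> C. d T = 1}"
      using sub C_tri C2 by blast
    thus ?thesis
      unfolding P3_def d_def[symmetric] using sub C_tri C2 by auto
  qed
  moreover note component_degree_trichotomy[OF C_def fin neighbours_sym neighbours_irrefl[OF assms(1)] deg d2]
  ultimately show ?thesis
    by blast
qed

end
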